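(* Let $\ell\in\{1,2\}$ and let ${\cal H}\subset{\cal H}_0$, $a_\ell$, $C_{{\rm G1},\ell}$, $C_{{\rm G2},\ell}$, ${\mathcal A}_\ell$ be as in the context (the standing assumptions there hold). If ${\mathcal A}_\ell^{-1}:{\cal H}^*\to{\cal H}$ exists, then $$\|{\mathcal A}_\ell^{-1}\|_{{\cal H}_0\to{\cal H}}\le\|{\mathcal A}_\ell^{-1}\|_{{\cal H}^*\to{\cal H}}\le (C_{{\rm G1},\ell})^{-1}\Big(1+C_{{\rm G2},\ell}\|{\mathcal A}_\ell^{-1}\|_{{\cal H}_0\to{\cal H}}\Big)$$ and $$\|{\mathcal A}_\ell^{-1}\|_{{\cal H}_0\to{\cal H}_0}\le\|{\mathcal A}_\ell^{-1}\|_{{\cal H}_0\to{\cal H}}\le (C_{{\rm G1},\ell})^{-1/2}\|{\mathcal A}_\ell^{-1}\|_{{\cal H}_0\to{\cal H}_0}\sqrt{C_{{\rm G2},\ell}+\|{\mathcal A}_\ell^{-1}\|_{{\cal H}_0\to{\cal H}_0}^{-1}}.$$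
   Context: Standing assumptions: ${\cal H}\subset{\cal H}_0$ are complex Hilbert spaces with $\|v\|_{{\cal H}_0}\le\|v\|_{{\cal H}}$ for $v\in{\cal H}$, and ${\cal H}_0$ is identified with its dual so that ${\cal H}\subset{\cal H}_0\subset{\cal H}^*$. ${\mathcal D}:{\cal H}\to{\cal H}_0$ is linear with $\|{\mathcal D}\|_{{\cal H}\to{\cal H}_0}\le 1$; $b(\cdot,\cdot)$ is a continuous sesquilinear form on ${\cal H}$; for $\ell=1,2$, $\mu_\ell^{-1}:{\cal H}_0\to{\cal H}_0$ and $\epsilon_\ell:{\cal H}_0\to{\cal H}_0$ are bounded linear operators, and $a_\ell(u,v):=(\mu_\ell^{-1}{\mathcal D}u,{\mathcal D}v)_{{\cal H}_0}+b(u,v)-(\epsilon_\ell u,v)_{{\cal H}_0}$. For $\ell=1,2$ there exist $C_{{\rm G1},\ell},C_{{\rm G2},\ell}>0$ with $|a_\ell(v,v)+C_{{\rm G2},\ell}\|v\|_{{\cal H}_0}^2|\ge C_{{\rm G1},\ell}\|v\|_{{\cal H}}^2$ for all $v\in{\cal H}$. ${\mathcal A}_\ell:{\cal H}\to{\cal H}^*$ is defined by $\langle{\mathcal A}_\ell u,v\rangle_{{\cal H}^*\times{\cal H}}=a_\ell(u,v)$. For $X\in\{{\cal H}^*,{\cal H}_0\}$, $Y\in\{{\cal H},{\cal H}_0\}$, $\|{\mathcal A}_\ell^{-1}\|_{X\to Y}$ denotes the operator norm of ${\mathcal A}_\ell^{-1}$ restricted to $X$ (using ${\cal H}_0\subset{\cal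 H}^*$) and measured in $Y$. *)

theory Defs
  imports "HOL-Analysis.Analysis"
begin

text \<open>Complex Hilbert spaces are modelled explicitly: an ambient abelian group 'v with
  a complex scalar multiplication sc (a complex vector space), a carrier subspace V,
  and a complex inner product ip on V, linear in the first and conjugate-linear in the
  second argument.\<close>

definition ip_norm :: "('v \<Rightarrow> 'v \<Rightarrow> complex) \<Rightarrow> 'v \<Rightarrow> real" where
  "ip_norm ip x = sqrt (Re (ip x x))"

definition hilbert_space_on ::
  "'v::ab_group_add set \<Rightarrow> (complex \<Rightarrow> 'v \<Rightarrow> 'v) \<Rightarrow> ('v \<Rightarrow> 'v \<Rightarrow> complex) \<Rightarrow> bool" where
  "hilbert_space_on V sc ip \<longleftrightarrow>
     (\<forall>c x y. sc c (x + y) = sc c x + sc c y) \<and>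
     (\<forall>c d x. sc (c + d) x = sc c x + sc d x) \<and>
     (\<forall>c d x. sc c (sc d x) = sc (c * d) x) \<and>
     (\<forall>x. sc 1 x = x) \<and>
     0 \<in> V \<and> (\<forall>x\<in>V. \<forall>y\<in>V. x + y \<in> V) \<and> (\<forall>c. \<forall>x\<in>V. sc c x \<in> V) \<and>
     (\<forall>x\<in>V. \<forall>y\<in>V. \<forall>z\<in>V. ip (x + y) z = ip x z + ip y z) \<and>
     (\<forall>c. \<forall>x\<in>V. \<forall>y\<in>V. ip (sc c x) y = c * ip x y) \<and>
     (\<forall>x\<in>V. \<forall>y\<in>V. ip y x = cnj (ip x y)) \<and>
     (\<forall>x\<in>V. 0 \<le> Re (ip x x)) \<and>
     (\<forall>x\<in>V. ip x x = 0 \<longrightarrow> x = 0) \<and>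
     (\<forall>X::nat \<Rightarrow> 'v. (\<forall>n. X n \<in> V) \<longrightarrow>
          (\<forall>e>0. \<exists>N. \<forall>m\<ge>N. \<forall>n\<ge>N. ip_norm ip (X m - X n) < e) \<longrightarrow>
          (\<exists>l\<in>V. \<forall>e>0. \<exists>N. \<forall>n\<ge>N. ip_norm ip (X n - l) < e))"

definition bounded_clinear_op ::
  "(complex \<Rightarrow> 'v::ab_group_add \<Rightarrow> 'v) \<Rightarrow> ('v \<Rightarrow> 'v \<Rightarrow> complex) \<Rightarrow> ('v \<Rightarrow> 'v) \<Rightarrow> bool" where
  "bounded_clinear_op sc ip T \<longleftrightarrow>
     (\<forall>x y. T (x + y) = T x + T y) \<and> (\<forall>c x. T (sc c x) = sc c (T x)) \<and>
     (\<exists>M. \<forall>x. ip_norm ip (T x) \<le> M * ip_norm ip x)"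

definition bounded_sesquilinear_on ::
  "'v::ab_group_add set \<Rightarrow> (complex \<Rightarrow> 'v \<Rightarrow> 'v) \<Rightarrow> ('v \<Rightarrow> 'v \<Rightarrow> complex)
     \<Rightarrow> ('v \<Rightarrow> 'v \<Rightarrow> complex) \<Rightarrow> bool" where
  "bounded_sesquilinear_on V sc ip b \<longleftrightarrow>
     (\<forall>x\<in>V. \<forall>y\<in>V. \<forall>z\<in>V. b (x + y) z = b x z + b y z) \<and>
     (\<forall>x\<in>V. \<forall>y\<in>V. \<forall>z\<in>V. b x (y + z) = b x y + b x z) \<and>
     (\<forall>c. \<forall>x\<in>V. \<forall>y\<in>V. b (sc c x) y = c * b x y) \<and>
     (\<forall>c. \<forall>x\<in>V. \<forall>y\<in>V. b x (sc c y) = cnj c * b x y) \<and>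
     (\<exists>M. \<forall>x\<in>V. \<forall>y\<in>V. cmod (b x y) \<le> M * ip_norm ip x * ip_norm ip y)"

text \<open>The (anti)dual space H*: bounded conjugate-linear functionals on V, extended by 0
  outside V (so that they are determined by their values on V).  The duality pairing
  is \<langle>\<phi>, v\<rangle> = \<phi> v, conjugate-linear in v, consistent with (f, v)_{H0}.\<close>
definition dual_space ::
  "'v::ab_group_add set \<Rightarrow> (complex \<Rightarrow> 'v \<Rightarrow> 'v) \<Rightarrow> ('v \<Rightarrow> 'v \<Rightarrow> complex) \<Rightarrow> ('v \<Rightarrow> complex) set" where
  "dual_space V sc ip =
     {\<phi>. (\<forall>x\<in>V. \<forall>y\<in>V. \<phi> (x + y) = \<phi> x + \<phi> y) \<and>
         (\<forall>c. \<forall>x\<in>V. \<phi> (sc c x) = cnj c * \<phi> x) \<and>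
         (\<exists>M. \<forall>x\<in>V. cmod (\<phi> x) \<le> M * ip_norm ip x) \<and>
         (\<forall>x. x \<notin> V \<longrightarrow> \<phi> x = 0)}"

definition dual_norm :: "'v::zero set \<Rightarrow> ('v \<Rightarrow> 'v \<Rightarrow> complex) \<Rightarrow> ('v \<Rightarrow> complex) \<Rightarrow> real" where
  "dual_norm V ip \<phi> = Sup (insert 0 {cmod (\<phi> v) / ip_norm ip v | v. v \<in> V \<and> v \<noteq> 0})"

definition emb :: "'v set \<Rightarrow> ('v \<Rightarrow> 'v \<Rightarrow> complex) \<Rightarrow> 'v \<Rightarrow> ('v \<Rightarrow> complex)" where
  "emb V ip0 f = (\<lambda>v. if v \<in> V then ip0 f v else 0)"

definition form_op :: "'v set \<Rightarrow> ('v \<Rightarrow> 'v \<Rightarrow> complex) \<Rightarrow> 'v \<Rightarrow> ('v \<Rightarrow> complex)" where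
  "form_op V a u = (\<lambda>v. if v \<in> V then a u v else 0)"

definition opnorm_star_H ::
  "'v::ab_group_add set \<Rightarrow> (complex \<Rightarrow> 'v \<Rightarrow> 'v) \<Rightarrow> ('v \<Rightarrow> 'v \<Rightarrow> complex)
     \<Rightarrow> (('v \<Rightarrow> complex) \<Rightarrow> 'v) \<Rightarrow> real" where
  "opnorm_star_H V sc ipH Ainv =
     Sup (insert 0 {ip_norm ipH (Ainv \<phi>) / dual_norm V ipH \<phi> | \<phi>. \<phi> \<in> dual_space V sc ipH \<and> \<phi> \<noteq> (\<lambda>_. 0)})"

definition opnorm_0_H ::
  "'v::ab_group_add set \<Rightarrow> ('v \<Rightarrow> 'v \<Rightarrow> complex) \<Rightarrow> ('v \<Rightarrow> 'v \<Rightarrow> complex)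
     \<Rightarrow> (('v \<Rightarrow> complex) \<Rightarrow> 'v) \<Rightarrow> real" where
  "opnorm_0_H V ip0 ipH Ainv =
     Sup (insert 0 {ip_norm ipH (Ainv (emb V ip0 f)) / ip_norm ip0 f | f. f \<noteq> 0})"

definition opnorm_0_0 ::
  "'v::ab_group_add set \<Rightarrow> ('v \<Rightarrow> 'v \<Rightarrow> complex) \<Rightarrow> (('v \<Rightarrow> complex) \<Rightarrow> 'v) \<Rightarrow> real" where
  "opnorm_0_0 V ip0 Ainv =
     Sup (insert 0 {ip_norm ip0 (Ainv (emb V ip0 f)) / ip_norm ip0 f | f. f \<noteq> 0})"

end

theory Submission
  imports Defs
begin

(* By Garding's inequality the shifted form a + C_G2 (.,.)_H0 is coercive on H, so by Lax-Milgram
   (derived below from the projection and Riesz theorems) the shifted problem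
   (A + C_G2) w = phi has a solution with C_G1 |w|_H <= |phi|_H*.  Since A (w + C_G2 A^-1 w) = phi,
   this bounds |A^-1|_{H*->H} by (1 + C_G2 |A^-1|_{H0->H}) / C_G1.  For f in H0 and u = A^-1 f,
   Garding's inequality gives C_G1 |u|_H^2 <= |(f,u)_H0| + C_G2 |u|_H0^2 <= (N + C_G2 N^2) |f|_H0^2
   with N = |A^-1|_{H0->H0}, which is the last bound.  The remaining two inequalities only use
   that the embeddings H -> H0 -> H* do not increase norms. *)

lemma mult_square_le_imp_le:
  fixes b c x :: real
  assumes "c * x * x \<le> b * x" and "0 \<le> x" and "0 \<le> b"
  shows "c * x \<le> b"
proof (cases "x = 0")
  case False
  with assms(2) have "0 < x" by simp
  with assms(1) show ?thesis by (rule mult_right_le_imp_le)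
qed (use assms in simp)

lemma bdd_above_ratios:
  fixes f g :: "'a \<Rightarrow> real"
  assumes pos: "\<And>x. P x \<Longrightarrow> 0 < g x" and bound: "\<And>x. P x \<Longrightarrow> f x \<le> K * g x"
  shows "bdd_above (insert 0 {f x / g x | x. P x})"
proof (rule bdd_aboveI)
  fix r
  assume "r \<in> insert 0 {f x / g x | x. P x}"
  then consider "r = 0" | x where "P x" "r = f x / g x"
    by blast
  then show "r \<le> max 0 K"
  proof cases
    case 2
    then have "r \<le> K"
      using pos bound by (simp add: pos_divide_le_eq)
    then show ?thesis by simp
  qed simp
qed

lemma Sup_ratios_le:
  fixes f g :: "'a \<Rightarrow> real"
  assumes "\<And>x. P x \<Longrightarrow> 0 < g x" and "\<And>x. P x \<Longrightarrow> f x \<le> K * g x" and "0 \<le> K"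
  shows "Sup (insert 0 {f x / g x | x. P x}) \<le> K"
  using assms by (intro cSup_least) (auto simp: pos_divide_le_eq)

lemma le_Sup_ratios:
  fixes f g :: "'a \<Rightarrow> real"
  assumes pos: "\<And>x. P x \<Longrightarrow> 0 < g x" and bound: "\<And>x. P x \<Longrightarrow> f x \<le> K * g x" and "P x"
  shows "f x \<le> Sup (insert 0 {f x / g x | x. P x}) * g x"
proof -
  have "f x / g x \<le> Sup (insert 0 {f x / g x | x. P x})"
    using bdd_above_ratios[OF pos bound] \<open>P x\<close> by (intro cSup_upper) auto
  then show ?thesis
    using pos[OF \<open>P x\<close>] by (simp add: pos_divide_le_eq)
qed

lemma Sup_ratios_nonneg:
  fixes f g :: "'a \<Rightarrow> real"
  assumes pos: "\<And>x. P x \<Longrightarrow> 0 < g x" and bound: "\<And>x. P x \<Longrightarrow> f x \<le> K * g x"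
  shows "0 \<le> Sup (insert 0 {f x / g x | x. P x})"
  using bdd_above_ratios[OF pos bound] by (intro cSup_upper) auto

lemma bounded_sesquilinear_onD:
  assumes "bounded_sesquilinear_on V sc ip t"
  shows sesq_add_left: "x \<in> V \<Longrightarrow> y \<in> V \<Longrightarrow> z \<in> V \<Longrightarrow> t (x + y) z = t x z + t y z"
    and sesq_add_right: "x \<in> V \<Longrightarrow> y \<in> V \<Longrightarrow> z \<in> V \<Longrightarrow> t x (y + z) = t x y + t x z"
    and sesq_sc_left: "x \<in> V \<Longrightarrow> y \<in> V \<Longrightarrow> t (sc c x) y = c * t x y"
    and sesq_sc_right: "x \<in> V \<Longrightarrow> y \<in> V \<Longrightarrow> t x (sc c y) = cnj c * t x y"
    and sesq_bounded: "\<exists>K. \<forall>x\<in>V. \<forall>y\<in>V. cmod (t x y) \<le> K * ip_norm ip x * ip_norm ip y"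
  using assms unfolding bounded_sesquilinear_on_def by blast+

lemma bounded_sesquilinear_on_add:
  assumes s: "bounded_sesquilinear_on V sc ip s" and t: "bounded_sesquilinear_on V sc ip t"
  shows "bounded_sesquilinear_on V sc ip (\<lambda>u v. s u v + t u v)"
proof -
  obtain K L where K: "\<forall>x\<in>V. \<forall>y\<in>V. cmod (s x y) \<le> K * ip_norm ip x * ip_norm ip y"
    and L: "\<forall>x\<in>V. \<forall>y\<in>V. cmod (t x y) \<le> L * ip_norm ip x * ip_norm ip y"
    using sesq_bounded[OF s] sesq_bounded[OF t] by blast
  have bound: "cmod (s x y + t x y) \<le> (K + L) * ip_norm ip x * ip_norm ip y" if "x \<in> V" "y \<in> V" for x y
    using K L that norm_triangle_ineq[of "s x y" "t x y"] by (simp add: distrib_right) (meson add_mono order_trans)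
  show ?thesis
    unfolding bounded_sesquilinear_on_def
  proof (intro conjI)
    show "\<exists>M. \<forall>x\<in>V. \<forall>y\<in>V. cmod (s x y + t x y) \<le> M * ip_norm ip x * ip_norm ip y"
      using bound by blast
  qed (use s t in \<open>auto simp: bounded_sesquilinear_on_def algebra_simps\<close>)
qed

lemma bounded_sesquilinear_on_scale:
  assumes t: "bounded_sesquilinear_on V sc ip t"
  shows "bounded_sesquilinear_on V sc ip (\<lambda>u v. c * t u v)"
proof -
  obtain K where K: "\<forall>x\<in>V. \<forall>y\<in>V. cmod (t x y) \<le> K * ip_norm ip x * ip_norm ip y"
    using sesq_bounded[OF t] by blast
  have bound: "cmod (c * t x y) \<le> (cmod c * K) * ip_norm ip x * ip_norm ip y" if "x \<in> V" "y \<in> V" for x y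
    using K that by (simp add: norm_mult mult.assoc mult_left_mono)
  show ?thesis
    unfolding bounded_sesquilinear_on_def
  proof (intro conjI)
    show "\<exists>M. \<forall>x\<in>V. \<forall>y\<in>V. cmod (c * t x y) \<le> M * ip_norm ip x * ip_norm ip y"
      using bound by blast
  qed (use t in \<open>auto simp: bounded_sesquilinear_on_def algebra_simps\<close>)
qed

lemma bounded_sesquilinear_on_diff:
  assumes "bounded_sesquilinear_on V sc ip s" and "bounded_sesquilinear_on V sc ip t"
  shows "bounded_sesquilinear_on V sc ip (\<lambda>u v. s u v - t u v)"
  using bounded_sesquilinear_on_add[OF assms(1) bounded_sesquilinear_on_scale[OF assms(2), of "- 1"]] by simp

section \<open>Hilbert spaces on a carrier set\<close>

lemma hilbert_space_onD:
  assumes "hilbert_space_on V sc ip"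
  shows "\<forall>c x y. sc c (x + y) = sc c x + sc c y"
    and "\<forall>c d x. sc (c + d) x = sc c x + sc d x"
    and "\<forall>c d x. sc c (sc d x) = sc (c * d) x"
    and "\<forall>x. sc 1 x = x"
    and "0 \<in> V"
    and "\<forall>x\<in>V. \<forall>y\<in>V. x + y \<in> V"
    and "\<forall>c. \<forall>x\<in>V. sc c x \<in> V"
    and "\<forall>x\<in>V. \<forall>y\<in>V. \<forall>z\<in>V. ip (x + y) z = ip x z + ip y z"
    and "\<forall>c. \<forall>x\<in>V. \<forall>y\<in>V. ip (sc c x) y = c * ip x y"
    and "\<forall>x\<in>V. \<forall>y\<in>V. ip y x = cnj (ip x y)"
    and "\<forall>x\<in>V. 0 \<le> Re (ip x x)"
    and "\<forall>x\<in>V. ip x x = 0 \<longrightarrow> x = 0"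
    and "\<forall>X::nat \<Rightarrow> _. (\<forall>n. X n \<in> V) \<longrightarrow>
          (\<forall>e>0. \<exists>N. \<forall>m\<ge>N. \<forall>n\<ge>N. ip_norm ip (X m - X n) < e) \<longrightarrow>
          (\<exists>l\<in>V. \<forall>e>0. \<exists>N. \<forall>n\<ge>N. ip_norm ip (X n - l) < e)"
  using assms unfolding hilbert_space_on_def by - ((elim conjE; assumption)+)

locale hilbert_space =
  fixes V :: "'v::ab_group_add set" and sc :: "complex \<Rightarrow> 'v \<Rightarrow> 'v"
    and ip :: "'v \<Rightarrow> 'v \<Rightarrow> complex"
  assumes hilbert_space: "hilbert_space_on V sc ip"
begin

text \<open>Off V, nrm is the square root of a possibly negative real, hence the membership hypotheses below.\<close>

abbreviation nrm :: "'v \<Rightarrow> real" where "nrm \<equiv> ip_norm ip"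

lemmas sc_add_right = hilbert_space_onD(1)[OF hilbert_space, rule_format]
lemmas sc_add_left = hilbert_space_onD(2)[OF hilbert_space, rule_format]
lemmas sc_sc = hilbert_space_onD(3)[OF hilbert_space, rule_format]
lemmas sc_one = hilbert_space_onD(4)[OF hilbert_space, rule_format]
lemmas zero_mem = hilbert_space_onD(5)[OF hilbert_space]
lemmas add_mem = hilbert_space_onD(6)[OF hilbert_space, rule_format]
lemmas sc_mem = hilbert_space_onD(7)[OF hilbert_space, rule_format]
lemmas ip_add_left = hilbert_space_onD(8)[OF hilbert_space, rule_format]
lemmas ip_sc_left = hilbert_space_onD(9)[OF hilbert_space, rule_format]
lemmas ip_commute = hilbert_space_onD(10)[OF hilbert_space, rule_format]
lemmas ip_self_nonneg = hilbert_space_onD(11)[OF hilbert_space, rule_format]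
lemmas ip_self_eq_zero = hilbert_space_onD(12)[OF hilbert_space, rule_format]

lemma sc_zero_left: "sc 0 x = 0"
  using sc_add_left[of 0 0 x] by simp

lemma sc_minus_left: "sc (- c) x = - sc c x"
  using sc_add_left[of c "- c" x] by (simp add: sc_zero_left eq_neg_iff_add_eq_0 add.commute)

lemma sc_minus_one: "sc (- 1) x = - x"
  by (simp add: sc_minus_left sc_one)

lemma sc_diff_right: "sc c (x - y) = sc c x - sc c y"
  using sc_add_right[of c "x - y" y] by (simp add: algebra_simps)

lemma sc_two: "sc 2 x = x + x"
  using sc_add_left[of 1 1 x] by (simp add: sc_one)

lemma minus_mem: "x \<in> V \<Longrightarrow> - x \<in> V"
  using sc_mem[of x "- 1"] by (simp add: sc_minus_one)

lemma diff_mem: "x \<in> V \<Longrightarrow> y \<in> V \<Longrightarrow> x - y \<in> V"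
  using add_mem[of x "- y"] minus_mem by simp

lemma ip_add_right: "x \<in> V \<Longrightarrow> y \<in> V \<Longrightarrow> z \<in> V \<Longrightarrow> ip x (y + z) = ip x y + ip x z"
  by (simp add: ip_commute[of _ x] ip_add_left add_mem)

lemma ip_sc_right: "x \<in> V \<Longrightarrow> y \<in> V \<Longrightarrow> ip x (sc c y) = cnj c * ip x y"
  by (simp add: ip_commute[of _ x] ip_sc_left sc_mem)

lemma ip_zero_left: "y \<in> V \<Longrightarrow> ip 0 y = 0"
  using ip_add_left[of 0 0 y] zero_mem by simp

lemma ip_zero_right: "x \<in> V \<Longrightarrow> ip x 0 = 0"
  using ip_add_right[of x 0 0] zero_mem by simp

lemma ip_diff_left: "x \<in> V \<Longrightarrow> y \<in> V \<Longrightarrow> z \<in> V \<Longrightarrow> ip (x - y) z = ip x z - ip y z"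
  using ip_add_left[of "x - y" y z] diff_mem by simp

lemma ip_diff_right: "x \<in> V \<Longrightarrow> y \<in> V \<Longrightarrow> z \<in> V \<Longrightarrow> ip x (y - z) = ip x y - ip x z"
  using ip_add_right[of x "y - z" z] diff_mem by simp

lemma nrm_nonneg: "x \<in> V \<Longrightarrow> 0 \<le> nrm x"
  unfolding ip_norm_def using ip_self_nonneg by simp

lemma nrm_square: "x \<in> V \<Longrightarrow> (nrm x)\<^sup>2 = Re (ip x x)"
  unfolding ip_norm_def using ip_self_nonneg by simp

lemma ip_self: "x \<in> V \<Longrightarrow> ip x x = complex_of_real ((nrm x)\<^sup>2)"
  using ip_commute[of x x] by (simp add: nrm_square complex_eq_iff)

lemma nrm_eq_zero_iff: "x \<in> V \<Longrightarrow> nrm x = 0 \<longleftrightarrow> x = 0"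
  using ip_self[of x] ip_self_eq_zero[of x] ip_zero_left[OF zero_mem] by (auto simp: ip_norm_def)

lemma nrm_zero [simp]: "nrm 0 = 0"
  using nrm_eq_zero_iff zero_mem by blast

lemma nrm_pos: "x \<in> V \<Longrightarrow> x \<noteq> 0 \<Longrightarrow> 0 < nrm x"
  using nrm_eq_zero_iff nrm_nonneg by (metis less_eq_real_def)

lemma nrm_sc: "x \<in> V \<Longrightarrow> nrm (sc c x) = cmod c * nrm x"
proof -
  assume x: "x \<in> V"
  have "ip (sc c x) (sc c x) = (c * cnj c) * ip x x"
    using x by (simp add: ip_sc_left ip_sc_right sc_mem)
  also have "c * cnj c = complex_of_real ((cmod c)\<^sup>2)"
    by (rule complex_norm_square[symmetric])
  finally have "ip (sc c x) (sc c x) = complex_of_real ((cmod c)\<^sup>2) * ip x x" .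
  then show ?thesis
    unfolding ip_norm_def by (simp add: real_sqrt_mult)
qed

lemma nrm_minus_commute: "x \<in> V \<Longrightarrow> y \<in> V \<Longrightarrow> nrm (x - y) = nrm (y - x)"
  using nrm_sc[of "y - x" "- 1"] diff_mem by (simp add: sc_minus_one)

lemma nrm_add_square:
  "x \<in> V \<Longrightarrow> y \<in> V \<Longrightarrow> (nrm (x + y))\<^sup>2 = (nrm x)\<^sup>2 + (nrm y)\<^sup>2 + 2 * Re (ip x y)"
  using ip_commute[of x y]
  by (simp add: nrm_square add_mem ip_add_left ip_add_right)

lemma nrm_diff_square:
  "x \<in> V \<Longrightarrow> y \<in> V \<Longrightarrow> (nrm (x - y))\<^sup>2 = (nrm x)\<^sup>2 + (nrm y)\<^sup>2 - 2 * Re (ip x y)"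
  using ip_commute[of x y]
  by (simp add: nrm_square diff_mem ip_diff_left ip_diff_right)

lemma parallelogram_law:
  "x \<in> V \<Longrightarrow> y \<in> V \<Longrightarrow> (nrm (x + y))\<^sup>2 + (nrm (x - y))\<^sup>2 = 2 * (nrm x)\<^sup>2 + 2 * (nrm y)\<^sup>2"
  by (simp add: nrm_add_square nrm_diff_square)

lemma nrm_diff_square_le:
  assumes "x \<in> V" and "y \<in> V"
  shows "(nrm (x - y))\<^sup>2 \<le> 2 * (nrm x)\<^sup>2 + 2 * (nrm y)\<^sup>2"
  using parallelogram_law[OF assms] zero_le_power2[of "nrm (x + y)"] by linarith

lemma ip_cauchy_schwarz: "x \<in> V \<Longrightarrow> y \<in> V \<Longrightarrow> cmod (ip x y) \<le> nrm x * nrm y"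
proof -
  assume x: "x \<in> V" and y: "y \<in> V"
  show ?thesis
  proof (cases "y = 0")
    case True
    then show ?thesis using x by (simp add: ip_zero_right)
  next
    case False
    then have ny: "0 < nrm y" using nrm_pos y by blast
    define t where "t = ip x y / complex_of_real ((nrm y)\<^sup>2)"
    have "0 \<le> (nrm (x - sc t y))\<^sup>2" by simp
    also have "\<dots> = (nrm x)\<^sup>2 + (cmod t * nrm y)\<^sup>2 - 2 * Re (cnj t * ip x y)"
      using x y by (simp add: nrm_diff_square sc_mem nrm_sc ip_sc_right)
    also have "cnj t * ip x y = complex_of_real ((cmod (ip x y))\<^sup>2 / (nrm y)\<^sup>2)"
      unfolding t_def by (simp add: complex_mult_cnj cmod_power2 mult.commute[of "cnj _"])
    also have "(cmod t * nrm y)\<^sup>2 = (cmod (ip x y))\<^sup>2 / (nrm y)\<^sup>2"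
      using ny unfolding t_def by (simp add: norm_divide norm_power power_divide field_simps)
    finally have "(cmod (ip x y))\<^sup>2 / (nrm y)\<^sup>2 \<le> (nrm x)\<^sup>2"
      by simp
    then have "(cmod (ip x y))\<^sup>2 \<le> (nrm x * nrm y)\<^sup>2"
      using ny by (simp add: pos_divide_le_eq power_mult_distrib)
    then show ?thesis
      using nrm_nonneg x y by (blast intro: power2_le_imp_le mult_nonneg_nonneg)
  qed
qed

lemma nrm_triangle: "x \<in> V \<Longrightarrow> y \<in> V \<Longrightarrow> nrm (x + y) \<le> nrm x + nrm y"
proof -
  assume x: "x \<in> V" and y: "y \<in> V"
  have "Re (ip x y) \<le> nrm x * nrm y"
    using ip_cauchy_schwarz[OF x y] complex_Re_le_cmod order_trans by blast
  then have "(nrm (x + y))\<^sup>2 \<le> (nrm x + nrm y)\<^sup>2"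
    using x y by (simp add: nrm_add_square power2_sum)
  then show ?thesis
    using nrm_nonneg x y by (blast intro: power2_le_imp_le add_nonneg_nonneg)
qed

lemma nrm_triangle_diff:
  "x \<in> V \<Longrightarrow> y \<in> V \<Longrightarrow> z \<in> V \<Longrightarrow> nrm (x - z) \<le> nrm (x - y) + nrm (y - z)"
  using nrm_triangle[of "x - y" "y - z"] diff_mem by simp

definition Cauchy_seq :: "(nat \<Rightarrow> 'v) \<Rightarrow> bool" where
  "Cauchy_seq X \<longleftrightarrow> (\<forall>e>0. \<exists>N. \<forall>m\<ge>N. \<forall>n\<ge>N. nrm (X m - X n) < e)"

definition converges_to :: "(nat \<Rightarrow> 'v) \<Rightarrow> 'v \<Rightarrow> bool" where
  "converges_to X l \<longleftrightarrow> (\<lambda>n. nrm (X n - l)) \<longlonglongrightarrow> 0"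

lemma Cauchy_seq_converges:
  assumes "\<And>n. X n \<in> V" and "Cauchy_seq X"
  obtains l where "l \<in> V" and "converges_to X l"
proof -
  obtain l where l: "l \<in> V" and lim: "\<forall>e>0. \<exists>N. \<forall>n\<ge>N. nrm (X n - l) < e"
    using hilbert_space_onD(13)[OF hilbert_space] assms unfolding Cauchy_seq_def by blast
  have "converges_to X l"
    unfolding converges_to_def LIMSEQ_iff using lim assms(1) l by (simp add: nrm_nonneg diff_mem)
  with l that show ?thesis by blast
qed

lemma Cauchy_seqI_square:
  assumes bound: "\<And>m n. (nrm (X m - X n))\<^sup>2 \<le> \<delta> m + \<delta> n" and \<delta>: "\<delta> \<longlonglongrightarrow> 0"
  shows "Cauchy_seq X"
  unfolding Cauchy_seq_def
proof (intro allI impI)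
  fix e :: real
  assume e: "0 < e"
  then obtain N where N: "\<And>n. n \<ge> N \<Longrightarrow> \<bar>\<delta> n\<bar> < e\<^sup>2 / 2"
    using \<delta> unfolding LIMSEQ_iff by (metis diff_zero half_gt_zero real_norm_def zero_less_power)
  have "nrm (X m - X n) < e" if "m \<ge> N" "n \<ge> N" for m n
  proof (rule power2_less_imp_less)
    show "(nrm (X m - X n))\<^sup>2 < e\<^sup>2"
      using bound[of m n] N[OF that(1)] N[OF that(2)] by (simp add: abs_less_iff)
  qed (use e in simp)
  then show "\<exists>N. \<forall>m\<ge>N. \<forall>n\<ge>N. nrm (X m - X n) < e" by blast
qed

lemma converges_to_unique:
  assumes "converges_to X l" "converges_to X l'" "\<And>n. X n \<in> V" "l \<in> V" "l' \<in> V"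
  shows "l = l'"
proof -
  have "nrm (l - l') \<le> nrm (l - X n) + nrm (X n - l')" for n
    using assms nrm_triangle_diff by blast
  then have "nrm (l - l') \<le> nrm (X n - l) + nrm (X n - l')" for n
    using assms nrm_minus_commute by metis
  moreover have "(\<lambda>n. nrm (X n - l) + nrm (X n - l')) \<longlonglongrightarrow> 0 + 0"
    using assms(1,2) unfolding converges_to_def by (rule tendsto_add)
  ultimately have "nrm (l - l') \<le> 0"
    by (intro LIMSEQ_le_const) auto
  then show ?thesis
    using nrm_nonneg nrm_eq_zero_iff assms diff_mem by (metis antisym eq_iff_diff_eq_0)
qed

subsection \<open>The projection theorem\<close>

definition closed_subspace :: "'v set \<Rightarrow> bool" where
  "closed_subspace M \<longleftrightarrow> M \<subseteq> V \<and> 0 \<in> M \<and> (\<forall>x\<in>M. \<forall>y\<in>M. x + y \<in> M) \<and> (\<forall>c. \<forall>x\<in>M. sc c x \<in> M) \<and>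
     (\<forall>X l. (\<forall>n. X n \<in> M) \<longrightarrow> l \<in> V \<longrightarrow> converges_to X l \<longrightarrow> l \<in> M)"

lemma ip_eq_zero_if_nrm_le_nrm_diff:
  assumes y: "y \<in> V" and p: "p \<in> V" and le: "\<And>s. nrm y \<le> nrm (y - sc s p)"
  shows "ip y p = 0"
proof (rule ccontr)
  define q where "q = ip y p"
  define t where "t = 1 / ((nrm p)\<^sup>2 + 1)"
  assume "ip y p \<noteq> 0"
  then have q: "0 < cmod q" by (simp add: q_def)
  have "0 < (nrm p)\<^sup>2 + 1"
    by (simp add: add_nonneg_pos)
  then have t: "0 < t" "t * (nrm p)\<^sup>2 < 1"
    unfolding t_def by (simp_all add: divide_less_eq)
  have "(nrm y)\<^sup>2 \<le> (nrm (y - sc (complex_of_real t * q) p))\<^sup>2"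
    using le nrm_nonneg y by (simp add: power_mono)
  also have "\<dots> = (nrm y)\<^sup>2 + (t * cmod q * nrm p)\<^sup>2 - 2 * Re (cnj (complex_of_real t * q) * q)"
    using y p t by (simp add: nrm_diff_square sc_mem nrm_sc ip_sc_right norm_mult q_def)
  also have "Re (cnj (complex_of_real t * q) * q) = t * ((Re q)\<^sup>2 + (Im q)\<^sup>2)"
    by (simp add: power2_eq_square algebra_simps)
  also have "(Re q)\<^sup>2 + (Im q)\<^sup>2 = (cmod q)\<^sup>2"
    by (simp add: cmod_power2)
  also have "(nrm y)\<^sup>2 + (t * cmod q * nrm p)\<^sup>2 - 2 * (t * (cmod q)\<^sup>2)
      = (nrm y)\<^sup>2 - t * (cmod q)\<^sup>2 * (2 - t * (nrm p)\<^sup>2)"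
    by (simp add: power2_eq_square algebra_simps)
  also have "\<dots> < (nrm y)\<^sup>2"
    using q t by simp
  finally show False by simp
qed

lemma parallelogram_distance_bound:
  assumes x: "x \<in> V" and m: "m \<in> V" and m': "m' \<in> V"
    and d: "0 \<le> d" "d \<le> nrm (x - sc (1 / 2) (m + m'))"
  shows "(nrm (m - m'))\<^sup>2 \<le> 2 * ((nrm (x - m))\<^sup>2 - d\<^sup>2) + 2 * ((nrm (x - m'))\<^sup>2 - d\<^sup>2)"
proof -
  have "(x - m) + (x - m') = sc 2 (x - sc (1 / 2) (m + m'))"
    by (simp add: sc_diff_right sc_sc sc_two sc_one)
  then have "nrm ((x - m) + (x - m')) = 2 * nrm (x - sc (1 / 2) (m + m'))"
    using x m m' by (simp add: nrm_sc diff_mem add_mem sc_mem)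
  then have "(2 * d)\<^sup>2 \<le> (nrm ((x - m) + (x - m')))\<^sup>2"
    using d by (simp add: power_mono)
  moreover have "(nrm ((x - m) + (x - m')))\<^sup>2 + (nrm (m - m'))\<^sup>2 = 2 * (nrm (x - m))\<^sup>2 + 2 * (nrm (x - m'))\<^sup>2"
    using parallelogram_law[of "x - m" "x - m'"] x m m' nrm_minus_commute[of m' m] by (simp add: diff_mem)
  ultimately show ?thesis
    by (simp add: power_mult_distrib)
qed

lemma nearest_point_exists:
  assumes M: "closed_subspace M" and x: "x \<in> V"
  obtains m where "m \<in> M" and "\<And>p. p \<in> M \<Longrightarrow> nrm (x - m) \<le> nrm (x - p)"
proof -
  have MV: "M \<subseteq> V" and M_closed: "\<And>X l. (\<And>n. X n \<in> M) \<Longrightarrow> l \<in> V \<Longrightarrow> converges_to X l \<Longrightarrow> l \<in> M"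
    using M unfolding closed_subspace_def by blast+
  have mid: "sc (1 / 2) (m + m') \<in> M" if "m \<in> M" "m' \<in> M" for m m'
    using M that unfolding closed_subspace_def by blast
  define d where "d = Inf {nrm (x - p) | p. p \<in> M}"
  have ne: "{nrm (x - p) | p. p \<in> M} \<noteq> {}"
    using M unfolding closed_subspace_def by blast
  have bdd: "bdd_below {nrm (x - p) | p. p \<in> M}"
    using MV x by (auto intro!: bdd_belowI[of _ 0] nrm_nonneg diff_mem)
  have d_le: "d \<le> nrm (x - p)" if "p \<in> M" for p
    unfolding d_def using that bdd by (auto intro: cInf_lower)
  have d_nonneg: "0 \<le> d"
    unfolding d_def using ne MV x by (auto intro!: cInf_greatest nrm_nonneg diff_mem)
  have "\<forall>k. \<exists>p\<in>M. nrm (x - p) < d + inverse (real (Suc k))"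
  proof
    fix k
    have "Inf {nrm (x - p) | p. p \<in> M} < d + inverse (real (Suc k))"
      unfolding d_def by simp
    then show "\<exists>p\<in>M. nrm (x - p) < d + inverse (real (Suc k))"
      using cInf_lessD[OF ne] by blast
  qed
  then obtain X where XM: "\<And>k. X k \<in> M" and X_close: "\<And>k. nrm (x - X k) < d + inverse (real (Suc k))"
    by metis
  have XV: "X k \<in> V" for k
    using XM MV by blast
  have lim: "(\<lambda>k. nrm (x - X k)) \<longlonglongrightarrow> d"
    using d_le[OF XM] X_close
    by (intro tendsto_sandwich[OF _ _ tendsto_const LIMSEQ_inverse_real_of_nat_add]) (auto intro!: always_eventually less_imp_le)
  have "Cauchy_seq X"
  proof (rule Cauchy_seqI_square)
    show "(nrm (X m - X n))\<^sup>2 \<le> 2 * ((nrm (x - X m))\<^sup>2 - d\<^sup>2) + 2 * ((nrm (x - X n))\<^sup>2 - d\<^sup>2)" for m n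
      using x XV d_nonneg d_le[OF mid[OF XM XM]] by (intro parallelogram_distance_bound)
    show "(\<lambda>k. 2 * ((nrm (x - X k))\<^sup>2 - d\<^sup>2)) \<longlonglongrightarrow> 0"
      using tendsto_mult[OF tendsto_const[of 2] tendsto_diff[OF tendsto_power[OF lim, of 2] tendsto_const[of "d\<^sup>2"]]]
      by simp
  qed
  then obtain l where l: "l \<in> V" and X_lim: "converges_to X l"
    using Cauchy_seq_converges XV by blast
  have lM: "l \<in> M"
    using M_closed[OF XM l X_lim] .
  have "nrm (x - l) \<le> nrm (x - X k) + nrm (X k - l)" for k
    using nrm_triangle_diff x XV l by blast
  moreover have "(\<lambda>k. nrm (x - X k) + nrm (X k - l)) \<longlonglongrightarrow> d + 0"
    using lim X_lim unfolding converges_to_def by (rule tendsto_add)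
  ultimately have "nrm (x - l) \<le> d"
    by (intro LIMSEQ_le_const) auto
  with lM d_le that show ?thesis
    by (meson order_trans)
qed

theorem projection_theorem:
  assumes M: "closed_subspace M" and x: "x \<in> V"
  obtains m where "m \<in> M" and "\<And>p. p \<in> M \<Longrightarrow> ip (x - m) p = 0"
proof -
  obtain m where m: "m \<in> M" and nearest: "\<And>p. p \<in> M \<Longrightarrow> nrm (x - m) \<le> nrm (x - p)"
    using nearest_point_exists[OF M x] by blast
  have MV: "M \<subseteq> V" and shift: "\<And>s p. p \<in> M \<Longrightarrow> m + sc s p \<in> M"
    using M m unfolding closed_subspace_def by blast+
  have "ip (x - m) p = 0" if p: "p \<in> M" for p
  proof (rule ip_eq_zero_if_nrm_le_nrm_diff)
    show "x - m \<in> V" "p \<in> V"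
      using x m p MV by (auto intro: diff_mem)
    show "nrm (x - m) \<le> nrm (x - m - sc s p)" for s
      using nearest[OF shift[OF p, of s]] by (simp add: diff_diff_eq)
  qed
  with m that show ?thesis by blast
qed

corollary orthogonal_complement_nontrivial:
  assumes M: "closed_subspace M" and ne: "M \<noteq> V"
  obtains y where "y \<in> V" "y \<noteq> 0" "\<And>p. p \<in> M \<Longrightarrow> ip y p = 0"
proof -
  obtain x where x: "x \<in> V" "x \<notin> M"
    using M ne unfolding closed_subspace_def by blast
  obtain m where m: "m \<in> M" and orth: "\<And>p. p \<in> M \<Longrightarrow> ip (x - m) p = 0"
    using projection_theorem[OF M x(1)] by blast
  have "m \<in> V"
    using M m unfolding closed_subspace_def by blast
  moreover have "x - m \<noteq> 0"
    using x m by auto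
  ultimately show ?thesis
    using that[of "x - m"] x orth diff_mem by blast
qed

subsection \<open>The Riesz representation theorem\<close>

lemma dual_spaceD:
  assumes "\<phi> \<in> dual_space V sc ip"
  shows dual_add: "x \<in> V \<Longrightarrow> y \<in> V \<Longrightarrow> \<phi> (x + y) = \<phi> x + \<phi> y"
    and dual_sc: "x \<in> V \<Longrightarrow> \<phi> (sc c x) = cnj c * \<phi> x"
    and dual_bounded: "\<exists>K. \<forall>x\<in>V. cmod (\<phi> x) \<le> K * nrm x"
    and dual_outside: "x \<notin> V \<Longrightarrow> \<phi> x = 0"
  using assms unfolding dual_space_def by blast+

lemma dual_zero: "\<phi> \<in> dual_space V sc ip \<Longrightarrow> \<phi> 0 = 0"
  using dual_sc[of \<phi> 0 0] zero_mem by (simp add: sc_zero_left)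

lemma dual_diff: "\<phi> \<in> dual_space V sc ip \<Longrightarrow> x \<in> V \<Longrightarrow> y \<in> V \<Longrightarrow> \<phi> (x - y) = \<phi> x - \<phi> y"
  using dual_add[of \<phi> "x - y" y] diff_mem by simp

lemma dual_norm_nonneg:
  assumes "\<phi> \<in> dual_space V sc ip"
  shows "0 \<le> dual_norm V ip \<phi>"
proof -
  obtain K where "\<forall>v\<in>V. cmod (\<phi> v) \<le> K * nrm v"
    using dual_bounded[OF assms] by blast
  then show ?thesis
    unfolding dual_norm_def using nrm_pos by (intro Sup_ratios_nonneg[where K = K]) auto
qed

lemma dual_norm_bound:
  assumes \<phi>: "\<phi> \<in> dual_space V sc ip" and v: "v \<in> V"
  shows "cmod (\<phi> v) \<le> dual_norm V ip \<phi> * nrm v"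
proof (cases "v = 0")
  case True
  then show ?thesis using dual_zero[OF \<phi>] by simp
next
  case False
  obtain K where "\<forall>v\<in>V. cmod (\<phi> v) \<le> K * nrm v"
    using dual_bounded[OF \<phi>] by blast
  then show ?thesis
    unfolding dual_norm_def using v False nrm_pos by (intro le_Sup_ratios[where K = K]) auto
qed

lemma dual_norm_le:
  assumes "\<And>v. v \<in> V \<Longrightarrow> cmod (\<phi> v) \<le> K * nrm v" and "0 \<le> K"
  shows "dual_norm V ip \<phi> \<le> K"
  unfolding dual_norm_def using assms nrm_pos by (intro Sup_ratios_le) auto

lemma dual_norm_pos:
  assumes \<phi>: "\<phi> \<in> dual_space V sc ip" and nonzero: "\<phi> \<noteq> (\<lambda>_. 0)"
  shows "0 < dual_norm V ip \<phi>"
proof -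
  obtain x where x: "\<phi> x \<noteq> 0"
    using nonzero by blast
  then have "x \<in> V"
    using dual_outside[OF \<phi>] by blast
  then have "0 < cmod (\<phi> x)" "cmod (\<phi> x) \<le> dual_norm V ip \<phi> * nrm x" "0 \<le> nrm x"
    using x dual_norm_bound[OF \<phi>] nrm_nonneg by auto
  then show ?thesis
    using dual_norm_nonneg[OF \<phi>] by (metis less_eq_real_def mult_eq_0_iff not_le)
qed

lemma closed_subspace_kernel:
  assumes \<phi>: "\<phi> \<in> dual_space V sc ip"
  shows "closed_subspace {v \<in> V. \<phi> v = 0}"
proof -
  have "l \<in> {v \<in> V. \<phi> v = 0}"
    if X: "\<And>n. X n \<in> {v \<in> V. \<phi> v = 0}" and l: "l \<in> V" and lim: "converges_to X l" for X l
  proof -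
    have "cmod (\<phi> l) \<le> dual_norm V ip \<phi> * nrm (X n - l)" for n
      using dual_norm_bound[OF \<phi>, of "l - X n"] dual_diff[OF \<phi> l, of "X n"] X[of n] l
        nrm_minus_commute[of l "X n"] by (simp add: diff_mem)
    moreover have "(\<lambda>n. dual_norm V ip \<phi> * nrm (X n - l)) \<longlonglongrightarrow> dual_norm V ip \<phi> * 0"
      using lim unfolding converges_to_def by (intro tendsto_mult tendsto_const)
    ultimately have "cmod (\<phi> l) \<le> 0"
      by (intro LIMSEQ_le_const) auto
    then show ?thesis
      using l by simp
  qed
  then show ?thesis
    unfolding closed_subspace_def
    using zero_mem add_mem sc_mem dual_zero[OF \<phi>] dual_add[OF \<phi>] dual_sc[OF \<phi>] by auto
qed

theorem riesz_representation:
  assumes \<phi>: "\<phi> \<in> dual_space V sc ip"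
  obtains r where "r \<in> V" and "\<And>v. v \<in> V \<Longrightarrow> \<phi> v = ip r v"
proof (cases "{v \<in> V. \<phi> v = 0} = V")
  case True
  then show ?thesis
    using that[of 0] zero_mem ip_zero_left by auto
next
  case False
  then obtain y where y: "y \<in> V" "y \<noteq> 0" and orth: "\<And>p. p \<in> {v \<in> V. \<phi> v = 0} \<Longrightarrow> ip y p = 0"
    using orthogonal_complement_nontrivial[OF closed_subspace_kernel[OF \<phi>]] by blast
  have \<phi>y: "\<phi> y \<noteq> 0"
    using orth[of y] y ip_self_eq_zero by auto
  have ny: "0 < nrm y"
    using nrm_pos y by blast
  define r where "r = sc (\<phi> y / complex_of_real ((nrm y)\<^sup>2)) y"
  have "\<phi> v = ip r v" if v: "v \<in> V" for v
  proof -
    define c where "c = cnj (\<phi> v / \<phi> y)"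
    have "\<phi> (v - sc c y) = 0"
      using \<phi>y v y by (simp add: dual_diff[OF \<phi>] dual_sc[OF \<phi>] sc_mem c_def)
    then have "ip y (v - sc c y) = 0"
      using orth v y by (simp add: diff_mem sc_mem)
    then have "ip y v = \<phi> v / \<phi> y * complex_of_real ((nrm y)\<^sup>2)"
      using v y by (simp add: ip_diff_right ip_sc_right sc_mem ip_self c_def)
    then show ?thesis
      using \<phi>y ny v y by (simp add: r_def ip_sc_left)
  qed
  moreover have "r \<in> V"
    unfolding r_def using y by (simp add: sc_mem)
  ultimately show ?thesis
    using that by blast
qed

subsection \<open>The Lax--Milgram lemma\<close>

lemma representation_unique:
  assumes "r \<in> V" "r' \<in> V" and "\<And>v. v \<in> V \<Longrightarrow> ip r v = ip r' v"
  shows "r = r'"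
proof -
  have "ip (r - r') (r - r') = 0"
    using assms by (simp add: ip_diff_left diff_mem)
  then show ?thesis
    using assms ip_self_eq_zero diff_mem by fastforce
qed

lemma form_op_in_dual:
  assumes t: "bounded_sesquilinear_on V sc ip t" and w: "w \<in> V"
  shows "form_op V t w \<in> dual_space V sc ip"
proof -
  obtain K where "\<forall>x\<in>V. \<forall>y\<in>V. cmod (t x y) \<le> K * nrm x * nrm y"
    using sesq_bounded[OF t] by blast
  then have "\<forall>v\<in>V. cmod (form_op V t w v) \<le> (K * nrm w) * nrm v"
    unfolding form_op_def using w by simp
  then show ?thesis
    unfolding dual_space_def form_op_def
    using sesq_add_right[OF t w] sesq_sc_right[OF t w] add_mem sc_mem by auto
qed

context
  fixes t :: "'v \<Rightarrow> 'v \<Rightarrow> complex" and B :: "'v \<Rightarrow> 'v"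
  assumes t: "bounded_sesquilinear_on V sc ip t"
    and B_mem: "\<And>w. w \<in> V \<Longrightarrow> B w \<in> V"
    and B_rep: "\<And>w v. w \<in> V \<Longrightarrow> v \<in> V \<Longrightarrow> t w v = ip (B w) v"
begin

lemma representer_add: "x \<in> V \<Longrightarrow> y \<in> V \<Longrightarrow> B (x + y) = B x + B y"
  by (rule representation_unique)
    (simp_all add: B_mem add_mem ip_add_left flip: B_rep sesq_add_left[OF t])

lemma representer_sc: "x \<in> V \<Longrightarrow> B (sc c x) = sc c (B x)"
  by (rule representation_unique)
    (simp_all add: B_mem sc_mem ip_sc_left flip: B_rep sesq_sc_left[OF t])

lemma representer_diff: "x \<in> V \<Longrightarrow> y \<in> V \<Longrightarrow> B (x - y) = B x - B y"
  using representer_add[of "x - y" y] diff_mem by simp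

lemma representer_bounded:
  obtains K where "\<And>w. w \<in> V \<Longrightarrow> nrm (B w) \<le> K * nrm w"
proof -
  obtain K where K: "\<forall>x\<in>V. \<forall>y\<in>V. cmod (t x y) \<le> K * nrm x * nrm y"
    using sesq_bounded[OF t] by blast
  have "nrm (B w) \<le> \<bar>K\<bar> * nrm w" if w: "w \<in> V" for w
  proof -
    have "(nrm (B w))\<^sup>2 \<le> cmod (t w (B w))"
      using w B_mem by (simp add: B_rep nrm_square complex_Re_le_cmod)
    also have "\<dots> \<le> \<bar>K\<bar> * nrm w * nrm (B w)"
      using K w B_mem[OF w] nrm_nonneg[OF w] nrm_nonneg[OF B_mem[OF w]]
      by (metis abs_ge_self mult_right_mono order_trans)
    finally show ?thesis
      using mult_square_le_imp_le[of 1 "nrm (B w)" "\<bar>K\<bar> * nrm w"] nrm_nonneg w B_mem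
      by (simp add: power2_eq_square)
  qed
  then show ?thesis
    using that by blast
qed

lemma representer_converges:
  assumes W: "\<And>n. W n \<in> V" and w: "w \<in> V" and lim: "converges_to W w"
  shows "converges_to (\<lambda>n. B (W n)) (B w)"
proof -
  obtain K where K: "\<And>w. w \<in> V \<Longrightarrow> nrm (B w) \<le> K * nrm w"
    using representer_bounded by blast
  have bound: "norm (nrm (B (W n) - B w)) \<le> K * nrm (W n - w)" for n
    using K[of "W n - w"] W w B_mem nrm_nonneg by (simp add: representer_diff diff_mem)
  show ?thesis
    unfolding converges_to_def
  proof (rule Lim_null_comparison)
    show "\<forall>\<^sub>F n in sequentially. norm (nrm (B (W n) - B w)) \<le> K * nrm (W n - w)"
      using bound by simp
    show "(\<lambda>n. K * nrm (W n - w)) \<longlonglongrightarrow> 0"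
      using tendsto_mult[OF tendsto_const lim[unfolded converges_to_def]] by simp
  qed
qed

context
  fixes C :: real
  assumes C: "0 < C" and coercive: "\<And>w. w \<in> V \<Longrightarrow> C * (nrm w)\<^sup>2 \<le> cmod (t w w)"
begin

lemma representer_bounded_below: "w \<in> V \<Longrightarrow> C * nrm w \<le> nrm (B w)"
proof -
  assume w: "w \<in> V"
  have "C * nrm w * nrm w \<le> nrm (B w) * nrm w"
    using coercive[OF w] ip_cauchy_schwarz[OF B_mem[OF w] w]
    by (simp add: B_rep[OF w w] power2_eq_square mult.assoc)
  then show ?thesis
    using nrm_nonneg[OF w] nrm_nonneg[OF B_mem[OF w]] by (rule mult_square_le_imp_le)
qed

lemma representer_preimage_Cauchy:
  assumes W: "\<And>n. W n \<in> V" and l: "l \<in> V" and lim: "converges_to (\<lambda>n. B (W n)) l"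
  shows "Cauchy_seq W"
proof (rule Cauchy_seqI_square)
  show "(nrm (W m - W n))\<^sup>2 \<le> 2 * (nrm (B (W m) - l))\<^sup>2 / C\<^sup>2 + 2 * (nrm (B (W n) - l))\<^sup>2 / C\<^sup>2" for m n
  proof -
    have "C * nrm (W m - W n) \<le> nrm (B (W m) - B (W n))"
      using representer_bounded_below[of "W m - W n"] W by (simp add: diff_mem representer_diff)
    then have "(C * nrm (W m - W n))\<^sup>2 \<le> (nrm ((B (W m) - l) - (B (W n) - l)))\<^sup>2"
      using C W nrm_nonneg diff_mem by (simp add: power_mono)
    also have "\<dots> \<le> 2 * (nrm (B (W m) - l))\<^sup>2 + 2 * (nrm (B (W n) - l))\<^sup>2"
      using nrm_diff_square_le[of "B (W m) - l" "B (W n) - l"] W B_mem l by (simp add: diff_mem)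
    finally show ?thesis
      using C by (simp add: power_mult_distrib field_simps)
  qed
  show "(\<lambda>n. 2 * (nrm (B (W n) - l))\<^sup>2 / C\<^sup>2) \<longlonglongrightarrow> 0"
    using tendsto_divide[OF tendsto_mult[OF tendsto_const[of 2]
          tendsto_power[OF lim[unfolded converges_to_def], of 2]] tendsto_const[of "C\<^sup>2"]] C
    by simp
qed

lemma closed_subspace_representer_range: "closed_subspace (B ` V)"
proof -
  have "l \<in> B ` V" if X: "\<And>n. X n \<in> B ` V" and l: "l \<in> V" and lim: "converges_to X l" for X l
  proof -
    have "\<forall>n. \<exists>w. w \<in> V \<and> X n = B w"
      using X by blast
    then obtain W where W: "\<And>n. W n \<in> V" and XW: "X = (\<lambda>n. B (W n))"
      by metis
    obtain w where w: "w \<in> V" and W_lim: "converges_to W w"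
      using Cauchy_seq_converges W representer_preimage_Cauchy[OF W l lim[unfolded XW]] by blast
    have "l = B w"
      using converges_to_unique[OF lim[unfolded XW] representer_converges[OF W w W_lim]] W B_mem l w
      by blast
    then show ?thesis
      using w by blast
  qed
  moreover have "B 0 = 0"
    using representer_sc[OF zero_mem, of 0] by (simp add: sc_zero_left)
  ultimately show ?thesis
    unfolding closed_subspace_def using B_mem zero_mem
    by (force simp: image_iff add_mem sc_mem representer_add[symmetric] representer_sc[symmetric])
qed

lemma representer_surjective: "B ` V = V"
proof (rule ccontr)
  assume "B ` V \<noteq> V"
  then obtain y where y: "y \<in> V" "y \<noteq> 0" and orth: "\<And>p. p \<in> B ` V \<Longrightarrow> ip y p = 0"
    using orthogonal_complement_nontrivial[OF closed_subspace_representer_range] by blast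
  have "t y y = cnj (ip y (B y))"
    using B_rep[OF y(1) y(1)] ip_commute[OF y(1) B_mem[OF y(1)]] by simp
  then have "t y y = 0"
    using orth y by simp
  then have "nrm y = 0"
    using coercive[OF y(1)] C by (simp add: mult_le_0_iff)
  then show False
    using y nrm_eq_zero_iff by blast
qed

end

end

theorem lax_milgram:
  assumes t: "bounded_sesquilinear_on V sc ip t" and C: "0 < C"
    and coercive: "\<And>w. w \<in> V \<Longrightarrow> C * (nrm w)\<^sup>2 \<le> cmod (t w w)"
    and \<phi>: "\<phi> \<in> dual_space V sc ip"
  obtains w where "w \<in> V" and "\<And>v. v \<in> V \<Longrightarrow> t w v = \<phi> v" and "C * nrm w \<le> dual_norm V ip \<phi>"
proof -
  have "\<forall>w\<in>V. \<exists>r\<in>V. \<forall>v\<in>V. t w v = ip r v"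
  proof
    fix w
    assume "w \<in> V"
    then obtain r where "r \<in> V" "\<And>v. v \<in> V \<Longrightarrow> form_op V t w v = ip r v"
      using riesz_representation[OF form_op_in_dual[OF t]] by blast
    then show "\<exists>r\<in>V. \<forall>v\<in>V. t w v = ip r v"
      unfolding form_op_def by auto
  qed
  then obtain B where B_mem: "\<And>w. w \<in> V \<Longrightarrow> B w \<in> V"
    and B_rep: "\<And>w v. w \<in> V \<Longrightarrow> v \<in> V \<Longrightarrow> t w v = ip (B w) v"
    by metis
  obtain r where r: "r \<in> V" and \<phi>_rep: "\<And>v. v \<in> V \<Longrightarrow> \<phi> v = ip r v"
    using riesz_representation[OF \<phi>] by blast
  obtain w where w: "w \<in> V" and "r = B w"
    using r representer_surjective[OF t B_mem B_rep C coercive] by blast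
  then have solves: "t w v = \<phi> v" if "v \<in> V" for v
    using that by (simp add: B_rep \<phi>_rep)
  have "C * nrm w * nrm w \<le> dual_norm V ip \<phi> * nrm w"
    using coercive[OF w] dual_norm_bound[OF \<phi> w] solves[OF w] by (simp add: power2_eq_square)
  then have "C * nrm w \<le> dual_norm V ip \<phi>"
    using nrm_nonneg[OF w] dual_norm_nonneg[OF \<phi>] by (rule mult_square_le_imp_le)
  then show ?thesis
    using that w solves by blast
qed

end

section \<open>Garding forms on a continuously embedded pair of Hilbert spaces\<close>

locale hilbert_embedding =
  H0: hilbert_space UNIV sc ip0 + H: hilbert_space V sc ipH
  for V :: "'v::ab_group_add set" and sc :: "complex \<Rightarrow> 'v \<Rightarrow> 'v" and ip0 ipH :: "'v \<Rightarrow> 'v \<Rightarrow> complex" +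
  assumes nrm_le: "\<And>v. v \<in> V \<Longrightarrow> ip_norm ip0 v \<le> ip_norm ipH v"
begin

definition bounded_map_into_H0 :: "('v \<Rightarrow> 'v) \<Rightarrow> bool" where
  "bounded_map_into_H0 P \<longleftrightarrow> (\<forall>x\<in>V. \<forall>y\<in>V. P (x + y) = P x + P y) \<and> (\<forall>c. \<forall>x\<in>V. P (sc c x) = sc c (P x)) \<and>
     (\<exists>K. \<forall>x\<in>V. ip_norm ip0 (P x) \<le> K * ip_norm ipH x)"

lemma bounded_map_into_H0_id: "bounded_map_into_H0 (\<lambda>x. x)"
  unfolding bounded_map_into_H0_def using nrm_le by (metis mult_1)

lemma bounded_map_into_H0_comp:
  assumes T: "bounded_clinear_op sc ip0 T" and P: "bounded_map_into_H0 P"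
  shows "bounded_map_into_H0 (\<lambda>x. T (P x))"
proof -
  obtain M where M: "\<And>x. ip_norm ip0 (T x) \<le> M * ip_norm ip0 x"
    using T unfolding bounded_clinear_op_def by blast
  obtain K where K: "\<And>x. x \<in> V \<Longrightarrow> ip_norm ip0 (P x) \<le> K * ip_norm ipH x"
    using P unfolding bounded_map_into_H0_def by blast
  have "ip_norm ip0 (T (P x)) \<le> (\<bar>M\<bar> * K) * ip_norm ipH x" if "x \<in> V" for x
  proof -
    have "ip_norm ip0 (T (P x)) \<le> \<bar>M\<bar> * ip_norm ip0 (P x)"
      using M[of "P x"] H0.nrm_nonneg[of "P x"] by (meson abs_ge_self mult_right_mono order_trans UNIV_I)
    also have "\<dots> \<le> \<bar>M\<bar> * (K * ip_norm ipH x)"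
      using K[OF that] by (simp add: mult_left_mono)
    finally show ?thesis by (simp add: mult.assoc)
  qed
  then show ?thesis
    using T P unfolding bounded_map_into_H0_def bounded_clinear_op_def by auto
qed

lemma bounded_sesquilinear_ip0_maps:
  assumes P: "bounded_map_into_H0 P" and Q: "bounded_map_into_H0 Q"
  shows "bounded_sesquilinear_on V sc ipH (\<lambda>u v. ip0 (P u) (Q v))"
proof -
  obtain K where K: "\<And>x. x \<in> V \<Longrightarrow> ip_norm ip0 (P x) \<le> K * ip_norm ipH x"
    using P unfolding bounded_map_into_H0_def by blast
  obtain L where L: "\<And>x. x \<in> V \<Longrightarrow> ip_norm ip0 (Q x) \<le> L * ip_norm ipH x"
    using Q unfolding bounded_map_into_H0_def by blast
  have "cmod (ip0 (P x) (Q y)) \<le> (K * L) * ip_norm ipH x * ip_norm ipH y" if "x \<in> V" "y \<in> V" for x y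
  proof -
    have "cmod (ip0 (P x) (Q y)) \<le> ip_norm ip0 (P x) * ip_norm ip0 (Q y)"
      by (simp add: H0.ip_cauchy_schwarz)
    also have "\<dots> \<le> (K * ip_norm ipH x) * (L * ip_norm ipH y)"
      using K[OF that(1)] L[OF that(2)] H0.nrm_nonneg[of "P x"] H0.nrm_nonneg[of "Q y"]
      by (intro mult_mono) (auto intro: order_trans)
    finally show ?thesis by (simp add: ac_simps)
  qed
  then show ?thesis
    using P Q unfolding bounded_sesquilinear_on_def bounded_map_into_H0_def
    by (auto simp: H0.ip_add_left H0.ip_add_right H0.ip_sc_left H0.ip_sc_right)
qed

lemma emb_bound: "v \<in> V \<Longrightarrow> cmod (emb V ip0 f v) \<le> ip_norm ip0 f * ip_norm ipH v"
  unfolding emb_def using H0.ip_cauchy_schwarz[of f v] nrm_le[of v] H0.nrm_nonneg[of f]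
  by (auto intro: order_trans mult_left_mono)

lemma emb_in_dual: "emb V ip0 f \<in> dual_space V sc ipH"
  unfolding dual_space_def using emb_bound
  by (auto simp: emb_def H.add_mem H.sc_mem H0.ip_add_right H0.ip_sc_right)

lemma dual_norm_emb_le: "dual_norm V ipH (emb V ip0 f) \<le> ip_norm ip0 f"
  using emb_bound by (intro H.dual_norm_le) (auto simp: H0.nrm_nonneg)

lemma emb_zero: "emb V ip0 0 = (\<lambda>_. 0)"
  unfolding emb_def using H0.ip_zero_left by auto

end

locale garding_form = hilbert_embedding V sc ip0 ipH
  for V :: "'v::ab_group_add set" and sc ip0 ipH +
  fixes a :: "'v \<Rightarrow> 'v \<Rightarrow> complex" and C1 C2 :: real
  assumes a_sesq: "bounded_sesquilinear_on V sc ipH a"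
    and C1_pos: "0 < C1" and C2_nonneg: "0 \<le> C2"
    and garding: "\<And>v. v \<in> V \<Longrightarrow>
      C1 * (ip_norm ipH v)\<^sup>2 \<le> cmod (a v v + complex_of_real (C2 * (ip_norm ip0 v)\<^sup>2))"
begin

lemma shifted_problem_solvable:
  assumes \<phi>: "\<phi> \<in> dual_space V sc ipH"
  obtains w where "w \<in> V" and "\<And>v. v \<in> V \<Longrightarrow> a w v + complex_of_real C2 * ip0 w v = \<phi> v"
    and "C1 * ip_norm ipH w \<le> dual_norm V ipH \<phi>"
proof -
  have "bounded_sesquilinear_on V sc ipH (\<lambda>u v. a u v + complex_of_real C2 * ip0 u v)"
    using bounded_sesquilinear_ip0_maps[OF bounded_map_into_H0_id bounded_map_into_H0_id]
    by (intro bounded_sesquilinear_on_add a_sesq bounded_sesquilinear_on_scale)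
  moreover have "C1 * (ip_norm ipH w)\<^sup>2 \<le> cmod (a w w + complex_of_real C2 * ip0 w w)" if "w \<in> V" for w
    using garding[OF that] by (simp add: H0.ip_self)
  ultimately show ?thesis
    using H.lax_milgram[OF _ C1_pos _ \<phi>] that by blast
qed

end

locale invertible_garding_form = garding_form V sc ip0 ipH a C1 C2
  for V :: "'v::ab_group_add set" and sc ip0 ipH a C1 C2 +
  fixes Ainv :: "('v \<Rightarrow> complex) \<Rightarrow> 'v"
  assumes inv_range: "\<And>\<phi>. \<phi> \<in> dual_space V sc ipH \<Longrightarrow> Ainv \<phi> \<in> V \<and> form_op V a (Ainv \<phi>) = \<phi>"
    and inv_left: "\<And>u. u \<in> V \<Longrightarrow> Ainv (form_op V a u) = u"
    and inv_bounded: "\<exists>M. \<forall>\<phi>\<in>dual_space V sc ipH. ip_norm ipH (Ainv \<phi>) \<le> M * dual_norm V ipH \<phi>"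
begin

lemma Ainv_mem: "\<phi> \<in> dual_space V sc ipH \<Longrightarrow> Ainv \<phi> \<in> V"
  using inv_range by blast

lemma Ainv_solves:
  assumes "\<phi> \<in> dual_space V sc ipH" and "v \<in> V"
  shows "a (Ainv \<phi>) v = \<phi> v"
proof -
  have "form_op V a (Ainv \<phi>) v = \<phi> v"
    using inv_range[OF assms(1)] by simp
  then show ?thesis
    using assms(2) by (simp add: form_op_def)
qed

lemma Ainv_unique:
  assumes \<phi>: "\<phi> \<in> dual_space V sc ipH" and u: "u \<in> V" and solves: "\<And>v. v \<in> V \<Longrightarrow> a u v = \<phi> v"
  shows "Ainv \<phi> = u"
proof -
  have "form_op V a u = \<phi>"
    unfolding form_op_def using solves H.dual_outside[OF \<phi>] by auto
  then show ?thesis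
    using inv_left[OF u] by simp
qed

lemma Ainv_zero: "Ainv (\<lambda>_. 0) = 0"
  using Ainv_unique[of "\<lambda>_. 0" 0] emb_in_dual[of 0] H.zero_mem sesq_sc_left[OF a_sesq H.zero_mem, of _ 0]
  by (simp add: emb_zero H.sc_zero_left)

lemma Ainv_emb_solves: "v \<in> V \<Longrightarrow> a (Ainv (emb V ip0 f)) v = ip0 f v"
  using Ainv_solves[OF emb_in_dual] by (simp add: emb_def)

lemma Ainv_bounded:
  obtains K where "0 \<le> K" and "\<And>\<phi>. \<phi> \<in> dual_space V sc ipH \<Longrightarrow> ip_norm ipH (Ainv \<phi>) \<le> K * dual_norm V ipH \<phi>"
proof -
  obtain M where M: "\<And>\<phi>. \<phi> \<in> dual_space V sc ipH \<Longrightarrow> ip_norm ipH (Ainv \<phi>) \<le> M * dual_norm V ipH \<phi>"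
    using inv_bounded by blast
  have "ip_norm ipH (Ainv \<phi>) \<le> \<bar>M\<bar> * dual_norm V ipH \<phi>" if "\<phi> \<in> dual_space V sc ipH" for \<phi>
    using M[OF that] H.dual_norm_nonneg[OF that] by (meson abs_ge_self mult_right_mono order_trans)
  then show ?thesis
    using that[of "\<bar>M\<bar>"] by simp
qed

lemma Ainv_emb_bounded:
  obtains K where "\<And>f. ip_norm ipH (Ainv (emb V ip0 f)) \<le> K * ip_norm ip0 f"
proof -
  obtain K where K: "0 \<le> K" "\<And>\<phi>. \<phi> \<in> dual_space V sc ipH \<Longrightarrow> ip_norm ipH (Ainv \<phi>) \<le> K * dual_norm V ipH \<phi>"
    using Ainv_bounded by blast
  have "ip_norm ipH (Ainv (emb V ip0 f)) \<le> K * ip_norm ip0 f" for f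
    using K(2)[OF emb_in_dual] mult_left_mono[OF dual_norm_emb_le K(1)] by (rule order_trans)
  then show ?thesis
    using that by blast
qed

lemma opnorm_star_H_nonneg: "0 \<le> opnorm_star_H V sc ipH Ainv"
proof -
  obtain K where K: "\<And>\<phi>. \<phi> \<in> dual_space V sc ipH \<Longrightarrow> ip_norm ipH (Ainv \<phi>) \<le> K * dual_norm V ipH \<phi>"
    using Ainv_bounded by blast
  show ?thesis
    unfolding opnorm_star_H_def using H.dual_norm_pos K by (intro Sup_ratios_nonneg[where K = K]) auto
qed

lemma nrm_Ainv_le_opnorm_star_H:
  assumes \<phi>: "\<phi> \<in> dual_space V sc ipH"
  shows "ip_norm ipH (Ainv \<phi>) \<le> opnorm_star_H V sc ipH Ainv * dual_norm V ipH \<phi>"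
proof (cases "\<phi> = (\<lambda>_. 0)")
  case True
  then show ?thesis
    using opnorm_star_H_nonneg H.dual_norm_nonneg[OF \<phi>] by (simp add: Ainv_zero)
next
  case False
  obtain K where K: "\<And>\<phi>. \<phi> \<in> dual_space V sc ipH \<Longrightarrow> ip_norm ipH (Ainv \<phi>) \<le> K * dual_norm V ipH \<phi>"
    using Ainv_bounded by blast
  show ?thesis
    unfolding opnorm_star_H_def using H.dual_norm_pos K \<phi> False by (intro le_Sup_ratios[where K = K]) auto
qed

lemma opnorm_0_H_nonneg: "0 \<le> opnorm_0_H V ip0 ipH Ainv"
proof -
  obtain K where "\<And>f. ip_norm ipH (Ainv (emb V ip0 f)) \<le> K * ip_norm ip0 f"
    using Ainv_emb_bounded by blast
  then show ?thesis
    unfolding opnorm_0_H_def using H0.nrm_pos by (intro Sup_ratios_nonneg[where K = K]) auto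
qed

lemma nrm_Ainv_emb_le_opnorm_0_H:
  "ip_norm ipH (Ainv (emb V ip0 f)) \<le> opnorm_0_H V ip0 ipH Ainv * ip_norm ip0 f"
proof (cases "f = 0")
  case True
  then show ?thesis
    by (simp add: emb_zero Ainv_zero)
next
  case False
  obtain K where "\<And>f. ip_norm ipH (Ainv (emb V ip0 f)) \<le> K * ip_norm ip0 f"
    using Ainv_emb_bounded by blast
  then show ?thesis
    unfolding opnorm_0_H_def using H0.nrm_pos False by (intro le_Sup_ratios[where K = K]) auto
qed

lemma Ainv_emb_bounded0:
  obtains K where "\<And>f. ip_norm ip0 (Ainv (emb V ip0 f)) \<le> K * ip_norm ip0 f"
proof -
  obtain K where "\<And>f. ip_norm ipH (Ainv (emb V ip0 f)) \<le> K * ip_norm ip0 f"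
    using Ainv_emb_bounded by blast
  then show ?thesis
    using that nrm_le[OF Ainv_mem[OF emb_in_dual]] order_trans by meson
qed

lemma opnorm_0_0_nonneg: "0 \<le> opnorm_0_0 V ip0 Ainv"
proof -
  obtain K where "\<And>f. ip_norm ip0 (Ainv (emb V ip0 f)) \<le> K * ip_norm ip0 f"
    using Ainv_emb_bounded0 by blast
  then show ?thesis
    unfolding opnorm_0_0_def using H0.nrm_pos by (intro Sup_ratios_nonneg[where K = K]) auto
qed

lemma nrm_Ainv_emb_le_opnorm_0_0:
  "ip_norm ip0 (Ainv (emb V ip0 f)) \<le> opnorm_0_0 V ip0 Ainv * ip_norm ip0 f"
proof (cases "f = 0")
  case True
  then show ?thesis
    by (simp add: emb_zero Ainv_zero)
next
  case False
  obtain K where "\<And>f. ip_norm ip0 (Ainv (emb V ip0 f)) \<le> K * ip_norm ip0 f"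
    using Ainv_emb_bounded0 by blast
  then show ?thesis
    unfolding opnorm_0_0_def using H0.nrm_pos False by (intro le_Sup_ratios[where K = K]) auto
qed


lemma opnorm_0_H_le_opnorm_star_H: "opnorm_0_H V ip0 ipH Ainv \<le> opnorm_star_H V sc ipH Ainv"
proof -
  have "ip_norm ipH (Ainv (emb V ip0 f)) \<le> opnorm_star_H V sc ipH Ainv * ip_norm ip0 f" for f
    using nrm_Ainv_le_opnorm_star_H[OF emb_in_dual] mult_left_mono[OF dual_norm_emb_le opnorm_star_H_nonneg]
    by (rule order_trans)
  then show ?thesis
    unfolding opnorm_0_H_def using H0.nrm_pos opnorm_star_H_nonneg by (intro Sup_ratios_le) auto
qed

lemma opnorm_0_0_le_opnorm_0_H: "opnorm_0_0 V ip0 Ainv \<le> opnorm_0_H V ip0 ipH Ainv"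
proof -
  have "ip_norm ip0 (Ainv (emb V ip0 f)) \<le> opnorm_0_H V ip0 ipH Ainv * ip_norm ip0 f" for f
    using nrm_le[OF Ainv_mem[OF emb_in_dual]] nrm_Ainv_emb_le_opnorm_0_H by (rule order_trans)
  then show ?thesis
    unfolding opnorm_0_0_def using H0.nrm_pos opnorm_0_H_nonneg by (intro Sup_ratios_le) auto
qed

lemma nrm_Ainv_le_dual_norm:
  assumes \<phi>: "\<phi> \<in> dual_space V sc ipH"
  shows "C1 * ip_norm ipH (Ainv \<phi>) \<le> (1 + C2 * opnorm_0_H V ip0 ipH Ainv) * dual_norm V ipH \<phi>"
proof -
  let ?N = "opnorm_0_H V ip0 ipH Ainv"
  obtain w where w: "w \<in> V" and shifted: "\<And>v. v \<in> V \<Longrightarrow> a w v + complex_of_real C2 * ip0 w v = \<phi> v"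
    and w_bound: "C1 * ip_norm ipH w \<le> dual_norm V ipH \<phi>"
    using shifted_problem_solvable[OF \<phi>] by blast
  define z where "z = Ainv (emb V ip0 w)"
  have z: "z \<in> V"
    unfolding z_def by (rule Ainv_mem[OF emb_in_dual])
  have "Ainv \<phi> = w + sc (complex_of_real C2) z"
  proof (rule Ainv_unique[OF \<phi>])
    show "w + sc (complex_of_real C2) z \<in> V"
      using w z by (simp add: H.add_mem H.sc_mem)
    show "a (w + sc (complex_of_real C2) z) v = \<phi> v" if v: "v \<in> V" for v
      using v w z shifted[OF v] Ainv_emb_solves[OF v, of w]
      by (simp add: sesq_add_left[OF a_sesq] sesq_sc_left[OF a_sesq] H.sc_mem z_def)
  qed
  moreover have "ip_norm ipH (sc (complex_of_real C2) z) = C2 * ip_norm ipH z"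
    using H.nrm_sc[OF z] C2_nonneg by simp
  ultimately have "ip_norm ipH (Ainv \<phi>) \<le> ip_norm ipH w + C2 * ip_norm ipH z"
    using H.nrm_triangle[OF w H.sc_mem[OF z, of "complex_of_real C2"]] by simp
  moreover have z_bound: "ip_norm ipH z \<le> ?N * ip_norm ipH w"
    unfolding z_def using nrm_Ainv_emb_le_opnorm_0_H opnorm_0_H_nonneg nrm_le[OF w] by (meson mult_left_mono order_trans)
  ultimately have "ip_norm ipH (Ainv \<phi>) \<le> ip_norm ipH w + C2 * (?N * ip_norm ipH w)"
    using mult_left_mono[OF z_bound C2_nonneg] by linarith
  then have "ip_norm ipH (Ainv \<phi>) \<le> (1 + C2 * ?N) * ip_norm ipH w"
    by (simp add: algebra_simps)
  then have "C1 * ip_norm ipH (Ainv \<phi>) \<le> C1 * ((1 + C2 * ?N) * ip_norm ipH w)"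
    using C1_pos by simp
  also have "\<dots> = (1 + C2 * ?N) * (C1 * ip_norm ipH w)"
    by (simp add: ac_simps)
  also have "\<dots> \<le> (1 + C2 * ?N) * dual_norm V ipH \<phi>"
    using w_bound C2_nonneg opnorm_0_H_nonneg by (simp add: mult_left_mono)
  finally show ?thesis .
qed

lemma opnorm_star_H_le: "opnorm_star_H V sc ipH Ainv \<le> inverse C1 * (1 + C2 * opnorm_0_H V ip0 ipH Ainv)"
proof -
  have "ip_norm ipH (Ainv \<phi>) \<le> inverse C1 * (1 + C2 * opnorm_0_H V ip0 ipH Ainv) * dual_norm V ipH \<phi>"
    if "\<phi> \<in> dual_space V sc ipH" for \<phi>
    using nrm_Ainv_le_dual_norm[OF that] C1_pos by (simp add: field_simps)
  then show ?thesis
    unfolding opnorm_star_H_def using H.dual_norm_pos C1_pos C2_nonneg opnorm_0_H_nonneg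
    by (intro Sup_ratios_le) auto
qed

lemma nrm_Ainv_emb_square_le:
  defines "N \<equiv> opnorm_0_0 V ip0 Ainv"
  shows "C1 * (ip_norm ipH (Ainv (emb V ip0 f)))\<^sup>2 \<le> (N + C2 * N\<^sup>2) * (ip_norm ip0 f)\<^sup>2"
proof -
  define u where "u = Ainv (emb V ip0 f)"
  have u: "u \<in> V"
    unfolding u_def by (rule Ainv_mem[OF emb_in_dual])
  have u_bound: "ip_norm ip0 u \<le> N * ip_norm ip0 f"
    unfolding u_def N_def by (rule nrm_Ainv_emb_le_opnorm_0_0)
  have "C1 * (ip_norm ipH u)\<^sup>2 \<le> cmod (ip0 f u + complex_of_real (C2 * (ip_norm ip0 u)\<^sup>2))"
    using garding[OF u] Ainv_emb_solves[OF u] unfolding u_def by simp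
  also have "\<dots> \<le> cmod (ip0 f u) + cmod (complex_of_real (C2 * (ip_norm ip0 u)\<^sup>2))"
    by (rule norm_triangle_ineq)
  also have "\<dots> \<le> ip_norm ip0 f * ip_norm ip0 u + C2 * (ip_norm ip0 u)\<^sup>2"
    using H0.ip_cauchy_schwarz[of f u] C2_nonneg by (simp add: norm_mult norm_power abs_of_nonneg)
  also have "\<dots> \<le> ip_norm ip0 f * (N * ip_norm ip0 f) + C2 * (N * ip_norm ip0 f)\<^sup>2"
    using u_bound H0.nrm_nonneg C2_nonneg by (intro add_mono mult_left_mono power_mono) auto
  also have "\<dots> = (N + C2 * N\<^sup>2) * (ip_norm ip0 f)\<^sup>2"
    by (simp add: power2_eq_square algebra_simps)
  finally show ?thesis
    unfolding u_def .
qed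

lemma opnorm_0_H_le_sqrt:
  defines "N \<equiv> opnorm_0_0 V ip0 Ainv"
  shows "opnorm_0_H V ip0 ipH Ainv \<le> sqrt ((N + C2 * N\<^sup>2) / C1)"
proof -
  define Q where "Q = (N + C2 * N\<^sup>2) / C1"
  have Q: "0 \<le> Q"
    unfolding Q_def N_def using opnorm_0_0_nonneg C1_pos C2_nonneg by simp
  have "ip_norm ipH (Ainv (emb V ip0 f)) \<le> sqrt Q * ip_norm ip0 f" for f
  proof -
    have "(ip_norm ipH (Ainv (emb V ip0 f)))\<^sup>2 \<le> Q * (ip_norm ip0 f)\<^sup>2"
      using nrm_Ainv_emb_square_le[of f] C1_pos unfolding N_def Q_def by (simp add: field_simps)
    then have "ip_norm ipH (Ainv (emb V ip0 f)) \<le> sqrt (Q * (ip_norm ip0 f)\<^sup>2)"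
      by (rule real_le_rsqrt)
    then show ?thesis
      using H0.nrm_nonneg[of f] by (simp add: real_sqrt_mult)
  qed
  then show ?thesis
    unfolding opnorm_0_H_def Q_def[symmetric] using H0.nrm_pos Q by (intro Sup_ratios_le) auto
qed

end

lemma sqrt_div_eq_powr_mult_sqrt:
  fixes c d N :: real
  assumes c: "0 < c" and N: "0 \<le> N"
  shows "sqrt ((N + d * N\<^sup>2) / c) = c powr (-1/2) * N * sqrt (d + inverse N)"
proof (cases "N = 0")
  case False
  have powr: "c powr (-1/2) = inverse (sqrt c)"
  proof -
    have "c powr (-1/2) = inverse (c powr (1/2))"
      using powr_minus[of c "1/2"] by simp
    also have "c powr (1/2) = sqrt c"
      using c by (simp add: powr_half_sqrt)
    finally show ?thesis .
  qed
  have "N + d * N\<^sup>2 = N\<^sup>2 * (d + inverse N)"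
    using False by (simp add: field_simps power2_eq_square)
  moreover have "sqrt (N\<^sup>2) = N"
    using N by simp
  ultimately have "sqrt ((N + d * N\<^sup>2) / c) = N * sqrt (d + inverse N) * inverse (sqrt c)"
    by (simp only: real_sqrt_mult real_sqrt_inverse divide_inverse)
  then show ?thesis
    by (simp only: powr ac_simps)
qed simp

theorem lemma3p2:
  fixes sc :: "complex \<Rightarrow> 'v::ab_group_add \<Rightarrow> 'v"
    and ip0 ipH :: "'v \<Rightarrow> 'v \<Rightarrow> complex"
    and V :: "'v set"
    and D mu_inv eps :: "'v \<Rightarrow> 'v"
    and b a :: "'v \<Rightarrow> 'v \<Rightarrow> complex"
    and C_G1 C_G2 :: real
    and Ainv :: "('v \<Rightarrow> complex) \<Rightarrow> 'v"
  assumes H0: "hilbert_space_on UNIV sc ip0"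
    and H: "hilbert_space_on V sc ipH"
    and norm_le: "\<forall>v\<in>V. ip_norm ip0 v \<le> ip_norm ipH v"
    and dense: "\<forall>f. \<forall>e>0. \<exists>v\<in>V. ip_norm ip0 (f - v) < e"
    and D_lin: "\<forall>u\<in>V. \<forall>v\<in>V. D (u + v) = D u + D v"
    and D_hom: "\<forall>c. \<forall>u\<in>V. D (sc c u) = sc c (D u)"
    and D_bd: "\<forall>v\<in>V. ip_norm ip0 (D v) \<le> ip_norm ipH v"
    and b_form: "bounded_sesquilinear_on V sc ipH b"
    and mu: "bounded_clinear_op sc ip0 mu_inv"
    and ep: "bounded_clinear_op sc ip0 eps"
    and a_def: "\<forall>u v. a u v = ip0 (mu_inv (D u)) (D v) + b u v - ip0 (eps u) v"
    and C1: "C_G1 > 0" and C2: "C_G2 > 0"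
    and garding: "\<forall>v\<in>V. cmod (a v v + complex_of_real (C_G2 * (ip_norm ip0 v)\<^sup>2))
                          \<ge> C_G1 * (ip_norm ipH v)\<^sup>2"
    and inv_range: "\<forall>\<phi>\<in>dual_space V sc ipH. Ainv \<phi> \<in> V \<and> form_op V a (Ainv \<phi>) = \<phi>"
    and inv_left: "\<forall>u\<in>V. Ainv (form_op V a u) = u"
    and inv_bounded: "\<exists>M. \<forall>\<phi>\<in>dual_space V sc ipH.
                          ip_norm ipH (Ainv \<phi>) \<le> M * dual_norm V ipH \<phi>"
  shows "opnorm_0_H V ip0 ipH Ainv \<le> opnorm_star_H V sc ipH Ainv
       \<and> opnorm_star_H V sc ipH Ainv \<le> inverse C_G1 * (1 + C_G2 * opnorm_0_H V ip0 ipH Ainv)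
       \<and> opnorm_0_0 V ip0 Ainv \<le> opnorm_0_H V ip0 ipH Ainv
       \<and> opnorm_0_H V ip0 ipH Ainv \<le> C_G1 powr (-1/2) * opnorm_0_0 V ip0 Ainv
              * sqrt (C_G2 + inverse (opnorm_0_0 V ip0 Ainv))"
proof -
  interpret hilbert_embedding V sc ip0 ipH
    using H0 H norm_le by (simp add: hilbert_embedding_def hilbert_embedding_axioms_def hilbert_space_def)
  have D: "bounded_map_into_H0 D"
    unfolding bounded_map_into_H0_def using D_lin D_hom D_bd by (auto intro!: exI[of _ 1])
  have "a = (\<lambda>u v. ip0 (mu_inv (D u)) (D v) + b u v - ip0 (eps u) v)"
    using a_def by (simp add: fun_eq_iff)
  then have a_sesq: "bounded_sesquilinear_on V sc ipH a"
    by (simp add: bounded_sesquilinear_on_diff bounded_sesquilinear_on_add b_form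
        bounded_sesquilinear_ip0_maps D bounded_map_into_H0_comp[OF mu D]
        bounded_map_into_H0_comp[OF ep bounded_map_into_H0_id] bounded_map_into_H0_id)
  interpret invertible_garding_form V sc ip0 ipH a C_G1 C_G2 Ainv
    by unfold_locales (use a_sesq C1 C2 garding inv_range inv_left inv_bounded in auto)
  show ?thesis
    using opnorm_0_H_le_opnorm_star_H opnorm_star_H_le opnorm_0_0_le_opnorm_0_H opnorm_0_H_le_sqrt
      sqrt_div_eq_powr_mult_sqrt[OF C1 opnorm_0_0_nonneg] by simp
qed

end
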